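(* Let $m\ge3$ be odd and let $s=s(m)$. For every integer $n\ge2$ and every $t\in1+2\mathbb{Z}_2$, one has $$v_2\big(T_m(1+2^nt)-(1+2^nt)\big)=s+n+1.$$
   Context: $v_2$ is the $2$-adic valuation on $\mathbb{Z}_2$. For an integer $m\ge0$, the $m$-th Chebyshev polynomial is $$T_m(x)=\sum_{k=0}^{\lfloor m/2\rfloor}(-1)^k\frac{m}{m-k}\binom{m-k}{k}2^{m-2k-1}x^{m-2k}.$$ For odd $m\ge3$, $s(m)=\max\{n\ge2:\ 2^n\mid(m+1)\text{ or }2^n\mid(m-1)\}$. *)

theory Defs imports Complex_Main "HOL-Library.Extended_Nat" begin

definition chebT :: "nat \<Rightarrow> rat \<Rightarrow> rat" where
  "chebT m x = (\<Sum>k\<le>m div 2. (-1)^k * (of_nat m / of_nat (m - k))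
      * of_nat ((m - k) choose k) * (2::rat) powi (int m - 2 * int k - 1) * x ^ (m - 2 * k))"

definition s_val :: "nat \<Rightarrow> nat" where
  "s_val m = Max {n. n \<ge> 2 \<and> (2^n dvd (m + 1) \<or> 2^n dvd (m - 1))}"

text \<open>2-adic integers Z_2 as the inverse limit of Z/2^k Z: compatible sequences
  of residues a k \<in> {0..<2^k}.\<close>
definition Z2 :: "(nat \<Rightarrow> int) set" where
  "Z2 = {a. \<forall>k. 0 \<le> a k \<and> a k < 2^k \<and> a (Suc k) mod 2^k = a k}"

text \<open>Applying an integer polynomial function f (compatible with congruences)
  to a 2-adic integer, componentwise modulo 2^k.\<close>
definition z2_map :: "(int \<Rightarrow> int) \<Rightarrow> (nat \<Rightarrow> int) \<Rightarrow> (nat \<Rightarrow> int)" where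
  "z2_map f a = (\<lambda>k. f (a k) mod 2^k)"

definition v2 :: "(nat \<Rightarrow> int) \<Rightarrow> enat" where
  "v2 a = (if \<forall>k. a k = 0 then \<infinity> else enat (LEAST k. a (Suc k) \<noteq> 0))"

end

theory Submission
  imports Defs
begin

text \<open>Let \<open>M = 2\<^sup>s r\<close> (\<open>r\<close> odd) be the one of \<open>m - 1\<close>, \<open>m + 1\<close> that is divisible by 4, so
  \<open>m = M \<plusminus> 1\<close>. The addition formula gives
  \<open>T\<^sub>m(x) - x = x (T\<^sub>M(x) - 1) \<plusminus> (x\<^sup>2 - 1) U\<^sub>M\<^sub>-\<^sub>1(x)\<close>. For \<open>x = 1 + 2\<^sup>n t\<close> with \<open>t\<close> odd,
  iterating \<open>T\<^sub>2\<^sub>k = 2 T\<^sub>k\<^sup>2 - 1\<close> gives \<open>2\<^sup>n\<^sup>+\<^sup>2\<^sup>s | T\<^sub>M(x) - 1\<close>, while \<open>U\<^sub>2\<^sub>k\<^sub>-\<^sub>1 = 2 T\<^sub>k U\<^sub>k\<^sub>-\<^sub>1\<close>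
  shows that \<open>U\<^sub>M\<^sub>-\<^sub>1(x)\<close> has valuation exactly \<open>s\<close>; and \<open>x\<^sup>2 - 1\<close> has valuation exactly \<open>n + 1\<close>.
  Since \<open>s \<ge> 2\<close>, the second term dominates, so the valuation is \<open>s + n + 1\<close>. The explicit
  formula for \<open>T\<^sub>m\<close> satisfies the three-term recurrence, and all identities involved are
  polynomial, hence survive the truncations modulo \<open>2\<^sup>k\<close> that define \<open>\<int>\<^sub>2\<close>.\<close>

section \<open>Chebyshev polynomials over a commutative ring\<close>

fun chebyshev_T :: "nat \<Rightarrow> 'a::comm_ring_1 \<Rightarrow> 'a" where
  "chebyshev_T 0 x = 1"
| "chebyshev_T (Suc 0) x = x"
| "chebyshev_T (Suc (Suc k)) x = 2 * x * chebyshev_T (Suc k) x - chebyshev_T k x"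

text \<open>\<open>chebyshev_V k = U\<^sub>k\<^sub>-\<^sub>1\<close> for \<open>k \<ge> 1\<close>, where \<open>U\<close> is the Chebyshev polynomial of the
  second kind; the shift makes \<open>chebyshev_V 0 = 0\<close> and gives it the same recurrence as \<open>T\<close>.\<close>
fun chebyshev_V :: "nat \<Rightarrow> 'a::comm_ring_1 \<Rightarrow> 'a" where
  "chebyshev_V 0 x = 0"
| "chebyshev_V (Suc 0) x = 1"
| "chebyshev_V (Suc (Suc k)) x = 2 * x * chebyshev_V (Suc k) x - chebyshev_V k x"

lemma chebyshev_product_rule:
  fixes f :: "nat \<Rightarrow> 'a::comm_ring_1 \<Rightarrow> 'a"
  assumes rec: "\<And>k. f (Suc (Suc k)) x = 2 * x * f (Suc k) x - f k x"
    and "b \<le> a"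
  shows "2 * chebyshev_T b x * f a x = f (a + b) x + f (a - b) x"
  using \<open>b \<le> a\<close>
proof (induction b arbitrary: a rule: induct_nat_012)
  case 0
  then show ?case by simp
next
  case 1
  then obtain d where "a = Suc d" by (cases a) auto
  then show ?case by (simp add: rec)
next
  case (ge2 j)
  then obtain d where "a = Suc (Suc j) + d" using le_Suc_ex by blast
  then have a: "a = Suc (Suc (j + d))" by simp
  have up: "f (a + Suc (Suc j)) x = 2 * x * f (a + Suc j) x - f (a + j) x"
    using rec[of "a + j"] by simp
  have down: "f (a - j) x = 2 * x * f (a - Suc j) x - f (a - Suc (Suc j)) x"
    using rec[of d] by (simp add: a Suc_diff_le)
  have "2 * chebyshev_T (Suc (Suc j)) x * f a x
      = 2 * x * (2 * chebyshev_T (Suc j) x * f a x) - 2 * chebyshev_T j x * f a x"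
    by (simp add: algebra_simps)
  also have "\<dots> = 2 * x * (f (a + Suc j) x + f (a - Suc j) x) - (f (a + j) x + f (a - j) x)"
    using ge2.IH a by simp
  also have "\<dots> = f (a + Suc (Suc j)) x + f (a - Suc (Suc j)) x"
    using up down by (simp add: algebra_simps)
  finally show ?case .
qed

lemma chebyshev_T_product:
  "b \<le> a \<Longrightarrow> 2 * chebyshev_T b x * chebyshev_T a x = chebyshev_T (a + b) x + chebyshev_T (a - b) x"
  by (rule chebyshev_product_rule) simp_all

lemma chebyshev_V_product:
  "b \<le> a \<Longrightarrow> 2 * chebyshev_T b x * chebyshev_V a x = chebyshev_V (a + b) x + chebyshev_V (a - b) x"
  by (rule chebyshev_product_rule) simp_all

lemma chebyshev_T_double: "chebyshev_T (2 * k) x = 2 * chebyshev_T k x ^ 2 - 1"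
proof -
  have "2 * chebyshev_T k x * chebyshev_T k x = chebyshev_T (2 * k) x + 1"
    using chebyshev_T_product[of k k x] by (simp flip: mult_2)
  then show ?thesis by (simp add: power2_eq_square algebra_simps)
qed

lemma chebyshev_V_double: "chebyshev_V (2 * k) x = 2 * chebyshev_T k x * chebyshev_V k x"
  using chebyshev_V_product[of k k x] by (simp flip: mult_2)

lemma chebyshev_T_Suc_and_pred:
  "chebyshev_T (Suc k) x = x * chebyshev_T k x + (x\<^sup>2 - 1) * chebyshev_V k x
   \<and> chebyshev_T k x = x * chebyshev_T (Suc k) x - (x\<^sup>2 - 1) * chebyshev_V (Suc k) x"
proof (induction k)
  case 0
  then show ?case by (simp add: power2_eq_square)
next
  case (Suc k)
  note up = conjunct1[OF Suc.IH] and down = conjunct2[OF Suc.IH]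
  have "chebyshev_T (Suc (Suc k)) x = 2 * x * chebyshev_T (Suc k) x - chebyshev_T k x"
    by simp
  also have "\<dots> = 2 * x * chebyshev_T (Suc k) x
      - (x * chebyshev_T (Suc k) x - (x\<^sup>2 - 1) * chebyshev_V (Suc k) x)"
    by (subst down) (rule refl)
  finally have up': "chebyshev_T (Suc (Suc k)) x
      = x * chebyshev_T (Suc k) x + (x\<^sup>2 - 1) * chebyshev_V (Suc k) x"
    by (simp add: algebra_simps)
  have "x * chebyshev_T (Suc (Suc k)) x - (x\<^sup>2 - 1) * chebyshev_V (Suc (Suc k)) x
      = x * (x * chebyshev_T (Suc k) x - (x\<^sup>2 - 1) * chebyshev_V (Suc k) x)
        + (x\<^sup>2 - 1) * chebyshev_V k x"
    unfolding up' chebyshev_V.simps by (simp add: algebra_simps)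
  also have "\<dots> = x * chebyshev_T k x + (x\<^sup>2 - 1) * chebyshev_V k x"
    by (simp only: down[symmetric])
  also have "\<dots> = chebyshev_T (Suc k) x"
    by (rule up[symmetric])
  finally show ?case using up' by simp
qed

lemmas chebyshev_T_Suc = chebyshev_T_Suc_and_pred[THEN conjunct1]
  and chebyshev_T_pred = chebyshev_T_Suc_and_pred[THEN conjunct2]

lemma chebyshev_T_diff_dvd: "a - b dvd chebyshev_T k a - chebyshev_T k b"
proof (induction k rule: induct_nat_012)
  case (ge2 j)
  have "chebyshev_T (Suc (Suc j)) a - chebyshev_T (Suc (Suc j)) b
      = 2 * a * (chebyshev_T (Suc j) a - chebyshev_T (Suc j) b)
        + 2 * (a - b) * chebyshev_T (Suc j) b - (chebyshev_T j a - chebyshev_T j b)"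
    by (simp add: algebra_simps)
  also have "a - b dvd \<dots>"
  proof (rule dvd_diff[OF dvd_add ge2.IH(1)])
    show "a - b dvd 2 * a * (chebyshev_T (Suc j) a - chebyshev_T (Suc j) b)"
      using ge2.IH(2) by (rule dvd_mult)
    show "a - b dvd 2 * (a - b) * chebyshev_T (Suc j) b"
      by (metis dvd_mult dvd_mult2 dvd_refl)
  qed
  finally show ?case .
qed simp_all

lemma chebyshev_T_at_1 [simp]: "chebyshev_T k 1 = 1"
  by (induction k rule: induct_nat_012) simp_all

lemma chebyshev_T_minus_1_dvd: "x - 1 dvd chebyshev_T k x - 1"
  using chebyshev_T_diff_dvd[of x 1 k] by simp

lemma chebyshev_V_minus_index_dvd: "x - 1 dvd chebyshev_V k x - of_nat k"
proof (induction k rule: induct_nat_012)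
  case (ge2 j)
  have "chebyshev_V (Suc (Suc j)) x - of_nat (Suc (Suc j))
      = 2 * x * (chebyshev_V (Suc j) x - of_nat (Suc j)) - (chebyshev_V j x - of_nat j)
        + 2 * (of_nat j + 1) * (x - 1)"
    by (simp add: algebra_simps)
  also have "x - 1 dvd \<dots>"
  proof (rule dvd_add[OF dvd_diff[OF _ ge2.IH(1)]])
    show "x - 1 dvd 2 * x * (chebyshev_V (Suc j) x - of_nat (Suc j))"
      using ge2.IH(2) by (rule dvd_mult)
    show "x - 1 dvd 2 * (of_nat j + 1) * (x - 1)"
      by simp
  qed
  finally show ?case .
qed simp_all

lemma of_int_chebyshev_T: "of_int (chebyshev_T k x) = chebyshev_T k (of_int x)"
  by (induction k rule: induct_nat_012) simp_all

section \<open>The explicit formula satisfies the recurrence\<close>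

definition chebT_coeff :: "nat \<Rightarrow> nat \<Rightarrow> rat" where
  "chebT_coeff m k = of_nat m / of_nat (m - k) * of_nat ((m - k) choose k)"

lemma chebT_coeff_rec:
  assumes "2 * k < m"
  shows "chebT_coeff (m + 2) (Suc k) = chebT_coeff (m + 1) (Suc k) + chebT_coeff m k"
proof -
  define N where "N = m - k"
  have N: "m + 2 - Suc k = Suc N" "m + 1 - Suc k = N" "m - k = N" "N > k"
    using assms by (simp_all add: N_def)
  define B :: rat where "B = of_nat (N choose k)"
  have "of_nat (Suc N choose Suc k) * (of_nat k + 1) = (of_nat N + 1) * B"
    using arg_cong[OF Suc_times_binomial_eq[of N k], of "of_nat :: nat \<Rightarrow> rat"]
    by (simp add: B_def algebra_simps)
  then have X: "of_nat (Suc N choose Suc k) = (of_nat N + 1) * B / (of_nat k + 1)"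
    by (simp add: field_simps)
  have Y: "of_nat (N choose Suc k) = (of_nat N + 1) * B / (of_nat k + 1) - B"
    using X binomial_Suc_Suc[of N k] by (simp add: B_def)
  have m: "of_nat m = of_nat N + (of_nat k :: rat)" using assms by (simp add: N_def)
  have "(of_nat N :: rat) \<noteq> 0" "(of_nat N + 1 :: rat) \<noteq> 0" "(of_nat k + 1 :: rat) \<noteq> 0"
    using \<open>N > k\<close> by linarith+
  then show ?thesis
    unfolding chebT_coeff_def N X Y by (simp add: m B_def[symmetric] divide_simps) (simp add: algebra_simps)
qed

definition chebT_term :: "nat \<Rightarrow> nat \<Rightarrow> rat \<Rightarrow> rat" where
  "chebT_term m k x = (-1) ^ k * chebT_coeff m k * 2 powi (int m - 2 * int k - 1) * x ^ (m - 2 * k)"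

lemma chebT_term_eq_0: "m div 2 < k \<Longrightarrow> chebT_term m k x = 0"
  by (simp add: chebT_term_def chebT_coeff_def binomial_eq_0)

lemma chebT_eq_sum_terms: "m div 2 \<le> N \<Longrightarrow> chebT m x = (\<Sum>k\<le>N. chebT_term m k x)"
proof -
  assume "m div 2 \<le> N"
  have "chebT m x = (\<Sum>k\<le>m div 2. chebT_term m k x)"
    by (simp add: chebT_def chebT_term_def chebT_coeff_def mult.assoc)
  also have "\<dots> = (\<Sum>k\<le>N. chebT_term m k x)"
    using \<open>m div 2 \<le> N\<close> by (intro sum.mono_neutral_left) (auto simp: chebT_term_eq_0)
  finally show ?thesis .
qed

lemma chebT_term_0_rec: "chebT_term (m + 2) 0 x = 2 * x * chebT_term (m + 1) 0 x"
proof -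
  have "int (m + 2) - 2 * int 0 - 1 = int (m + 1)" "int (m + 1) - 2 * int 0 - 1 = int m" by simp_all
  then show ?thesis unfolding chebT_term_def by (simp only: power_int_of_nat) (simp add: chebT_coeff_def)
qed

lemma chebT_term_Suc_rec:
  assumes "m \<ge> 1" and "k \<le> m div 2"
  shows "chebT_term (m + 2) (Suc k) x = 2 * x * chebT_term (m + 1) (Suc k) x - chebT_term m k x"
proof (cases "2 * k < m")
  case True
  define e where "e = int m - 2 * int k - 1"
  define P where "P = 2 powi e * x ^ (m - 2 * k)"
  have "int (m + 1) - 2 * int (Suc k) - 1 + 1 = e" using True by (simp add: e_def)
  then have pow2: "2 * 2 powi (int (m + 1) - 2 * int (Suc k) - 1) = (2::rat) powi e"
    by (metis power_int_add_1' zero_neq_numeral)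
  have powx: "x * x ^ (m + 1 - 2 * Suc k) = x ^ (m - 2 * k)"
    using True by (simp flip: power_Suc add: Suc_diff_Suc)
  have "int (m + 2) - 2 * int (Suc k) - 1 = e" "m + 2 - 2 * Suc k = m - 2 * k"
    by (simp_all add: e_def)
  then have t1: "chebT_term (m + 2) (Suc k) x = (-1) ^ Suc k * chebT_coeff (m + 2) (Suc k) * P"
    unfolding chebT_term_def P_def by (simp only: mult.assoc)
  have "2 * x * chebT_term (m + 1) (Suc k) x = (-1) ^ Suc k * chebT_coeff (m + 1) (Suc k)
      * (2 * 2 powi (int (m + 1) - 2 * int (Suc k) - 1)) * (x * x ^ (m + 1 - 2 * Suc k))"
    by (simp add: chebT_term_def algebra_simps)
  then have t2: "2 * x * chebT_term (m + 1) (Suc k) x = (-1) ^ Suc k * chebT_coeff (m + 1) (Suc k) * P"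
    by (simp only: pow2 powx P_def mult.assoc)
  have t3: "chebT_term m k x = (-1) ^ k * chebT_coeff m k * P"
    by (simp add: chebT_term_def P_def e_def mult.assoc)
  show ?thesis unfolding t1 t2 t3 chebT_coeff_rec[OF True] by (simp add: algebra_simps)
next
  case False
  with assms have m: "m = 2 * k" "k \<ge> 1" by auto
  have "chebT_coeff (m + 2) (Suc k) = 2" "chebT_coeff m k = 2" "chebT_coeff (m + 1) (Suc k) = 0"
    using m by (simp_all add: chebT_coeff_def binomial_eq_0 field_simps)
  then show ?thesis by (simp add: chebT_term_def m power_int_minus)
qed

text \<open>The defining formula gives \<open>chebT 0 = 0\<close> (because \<open>0 / 0 = 0\<close>), so the
  recurrence only starts at \<open>m = 1\<close>.\<close>
lemma chebT_rec:
  assumes "m \<ge> 1"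
  shows "chebT (m + 2) x = 2 * x * chebT (m + 1) x - chebT m x"
proof -
  define N where "N = m div 2"
  have "chebT (m + 2) x = (\<Sum>k\<le>Suc N. chebT_term (m + 2) k x)"
    by (rule chebT_eq_sum_terms) (simp add: N_def)
  also have "\<dots> = chebT_term (m + 2) 0 x + (\<Sum>k\<le>N. chebT_term (m + 2) (Suc k) x)"
    by (rule sum.atMost_Suc_shift)
  also have "\<dots> = 2 * x * chebT_term (m + 1) 0 x
      + (\<Sum>k\<le>N. 2 * x * chebT_term (m + 1) (Suc k) x - chebT_term m k x)"
    using chebT_term_0_rec chebT_term_Suc_rec[OF assms] by (simp add: N_def)
  also have "\<dots> = 2 * x * (chebT_term (m + 1) 0 x + (\<Sum>k\<le>N. chebT_term (m + 1) (Suc k) x))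
      - (\<Sum>k\<le>N. chebT_term m k x)"
    by (simp add: sum_subtractf sum_distrib_left algebra_simps)
  also have "chebT_term (m + 1) 0 x + (\<Sum>k\<le>N. chebT_term (m + 1) (Suc k) x) = chebT (m + 1) x"
    by (subst sum.atMost_Suc_shift[symmetric], rule chebT_eq_sum_terms[symmetric]) (simp add: N_def)
  also have "(\<Sum>k\<le>N. chebT_term m k x) = chebT m x"
    by (rule chebT_eq_sum_terms[symmetric]) (simp add: N_def)
  finally show ?thesis .
qed

lemma chebT_eq_chebyshev_T: "m \<ge> 1 \<Longrightarrow> chebT m x = chebyshev_T m x"
proof -
  have "chebT (Suc k) x = chebyshev_T (Suc k) x \<and> chebT (Suc (Suc k)) x = chebyshev_T (Suc (Suc k)) x"
    for k
  proof (induction k)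
    case 0
    have "chebT 1 x = x"
      using chebT_eq_sum_terms[of 1 0 x] by (simp add: chebT_term_def chebT_coeff_def)
    moreover have "chebT 2 x = 2 * x\<^sup>2 - 1"
      using chebT_eq_sum_terms[of 2 1 x]
      by (simp add: chebT_term_def chebT_coeff_def power_int_minus)
    ultimately show ?case by (simp add: numeral_2_eq_2 power2_eq_square)
  next
    case (Suc k)
    then show ?case using chebT_rec[of "Suc k" x] by simp
  qed
  then show "m \<ge> 1 \<Longrightarrow> ?thesis" by (cases m) auto
qed

section \<open>Exact powers of 2 in Chebyshev values\<close>

lemma power2_dvd_mult_odd_iff:
  fixes q :: "'a::{semiring_parity, algebraic_semidom, linordered_semidom}"
  assumes "odd q"
  shows "2 ^ j dvd 2 ^ e * q \<longleftrightarrow> j \<le> e"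
proof
  assume dvd: "2 ^ j dvd 2 ^ e * q"
  show "j \<le> e"
  proof (rule ccontr)
    assume "\<not> j \<le> e"
    then have "(2::'a) ^ Suc e dvd 2 ^ j" by (intro le_imp_power_dvd) simp
    then have "2 ^ e * 2 dvd 2 ^ e * q"
      using dvd by (simp only: power_Suc2 dvd_trans)
    then have "2 dvd q" by simp
    with assms show False by simp
  qed
qed (simp add: le_imp_power_dvd dvd_mult2)

lemma exists_power2_times_odd: "(M::nat) > 0 \<Longrightarrow> \<exists>s r. M = 2 ^ s * r \<and> odd r"
proof (induction M rule: less_induct)
  case (less M)
  show ?case
  proof (cases "odd M")
    case True
    then show ?thesis by (intro exI[of _ 0] exI[of _ M]) simp
  next
    case False
    then obtain M' where M': "M = 2 * M'" by blast
    with less.prems less.IH[of M'] obtain s r where "M' = 2 ^ s * r" "odd r" by auto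
    with M' show ?thesis by (intro exI[of _ "Suc s"] exI[of _ r]) simp
  qed
qed

lemma s_val_decomposition:
  assumes "odd m" and "m \<ge> 3"
  obtains M r where "M = m - 1 \<or> M = m + 1" and "M = 2 ^ s_val m * r" and "odd r"
    and "s_val m \<ge> 2"
proof -
  obtain M M' where MM: "M = m - 1 \<and> M' = m + 1 \<or> M = m + 1 \<and> M' = m - 1"
    and "4 dvd M" and "\<not> 4 dvd M'"
  proof (cases "m mod 4 = 1")
    case True
    then have "4 dvd m - 1" "\<not> 4 dvd m + 1" using assms by presburger+
    then show ?thesis using that by blast
  next
    case False
    then have "4 dvd m + 1" "\<not> 4 dvd m - 1" using assms by presburger+
    then show ?thesis using that by blast
  qed
  have "M > 0" using MM assms by auto
  then obtain s r where sr: "M = 2 ^ s * r" "odd r" using exists_power2_times_odd by blast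
  have "s \<ge> 2"
    using \<open>4 dvd M\<close> power2_dvd_mult_odd_iff[OF sr(2), of 2 s] sr(1) by simp
  have "\<not> 2 ^ j dvd M'" if "j \<ge> 2" for j :: nat
  proof
    assume "2 ^ j dvd M'"
    with le_imp_power_dvd[OF that, of "2::nat"] have "2 ^ 2 dvd M'" by (rule dvd_trans)
    with \<open>\<not> 4 dvd M'\<close> show False by simp
  qed
  moreover have "2 ^ j dvd M \<longleftrightarrow> j \<le> s" for j
    using power2_dvd_mult_odd_iff[OF sr(2)] sr(1) by simp
  ultimately have S: "{j. j \<ge> 2 \<and> (2 ^ j dvd m + 1 \<or> 2 ^ j dvd m - 1)} = {2..s}"
    using MM by auto
  have "s_val m = s"
    unfolding s_val_def S using \<open>s \<ge> 2\<close> by (simp add: Max_eq_iff)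
  then show ?thesis using that MM sr \<open>s \<ge> 2\<close> by blast
qed

lemma chebyshev_T_two_power_mult_minus_1_dvd:
  fixes x :: "'a::comm_ring_1"
  assumes "2 ^ n dvd x - 1" and "n \<ge> 1"
  shows "2 ^ (n + 2 * s) dvd chebyshev_T (2 ^ s * r) x - 1"
proof (induction s)
  case 0
  show ?case using dvd_trans[OF assms(1) chebyshev_T_minus_1_dvd] by simp
next
  case (Suc s)
  define k where "k = 2 ^ s * r"
  obtain c where c: "chebyshev_T k x - 1 = 2 ^ (n + 2 * s) * c"
    using Suc.IH by (auto simp: k_def elim: dvdE)
  have "2 dvd (2::'a) ^ (n + 2 * s)" using assms(2) by (simp add: dvd_power)
  then obtain e :: 'a where "2 ^ (n + 2 * s) = 2 * e" by (elim dvdE)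
  then have d: "chebyshev_T k x + 1 = 2 * (e * c + 1)"
    using c by (simp add: algebra_simps)
  have "chebyshev_T (2 ^ Suc s * r) x - 1 = chebyshev_T (2 * k) x - 1"
    by (simp add: k_def mult.assoc)
  also have "\<dots> = 2 * (chebyshev_T k x - 1) * (chebyshev_T k x + 1)"
    unfolding chebyshev_T_double by (simp add: power2_eq_square algebra_simps)
  also have "\<dots> = 2 ^ (n + 2 * Suc s) * (c * (e * c + 1))"
    by (simp only: c d) (simp add: power_add algebra_simps)
  finally show ?case by simp
qed

lemma chebyshev_V_two_power_mult:
  fixes x :: "'a::ring_parity"
  assumes "odd x" and "odd r"
  shows "\<exists>q. odd q \<and> chebyshev_V (2 ^ s * r) x = 2 ^ s * q"
proof (induction s)
  case 0
  have "2 dvd x - 1" using assms(1) by simp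
  then have "2 dvd chebyshev_V r x - of_nat r"
    using chebyshev_V_minus_index_dvd by (rule dvd_trans)
  then show ?case using assms(2) by simp
next
  case (Suc s)
  then obtain q where q: "odd q" "chebyshev_V (2 ^ s * r) x = 2 ^ s * q" by blast
  have "2 dvd x - 1" using assms(1) by simp
  then have "2 dvd chebyshev_T (2 ^ s * r) x - 1"
    using chebyshev_T_minus_1_dvd by (rule dvd_trans)
  then have "odd (chebyshev_T (2 ^ s * r) x)" by auto
  moreover have "chebyshev_V (2 ^ Suc s * r) x = 2 ^ Suc s * (chebyshev_T (2 ^ s * r) x * q)"
    using chebyshev_V_double[of "2 ^ s * r" x] q(2) by (simp add: mult.assoc)
  ultimately show ?case
    using q(1) by (intro exI[of _ "chebyshev_T (2 ^ s * r) x * q"]) simp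
qed

lemma chebyshev_T_minus_id_exact:
  fixes u :: "'a::ring_parity"
  assumes "M = m - 1 \<or> M = m + 1" and "M = 2 ^ s * r" and "odd r" and "s \<ge> 2"
    and "n \<ge> 2" and "odd u"
  shows "\<exists>q. odd q \<and> chebyshev_T m (1 + 2 ^ n * u) - (1 + 2 ^ n * u) = 2 ^ (s + n + 1) * q"
proof -
  define x :: 'a where "x = 1 + 2 ^ n * u"
  obtain s' where s': "s = s' + 2" using assms(4) le_Suc_ex by (metis add.commute)
  obtain n' where n': "n = n' + 2" using assms(5) le_Suc_ex by (metis add.commute)
  have "2 ^ (n + 2 * s) dvd chebyshev_T M x - 1"
    using chebyshev_T_two_power_mult_minus_1_dvd[of n x s r] assms(2,5) by (simp add: x_def)
  then obtain c where c: "chebyshev_T M x - 1 = 2 ^ (n + 2 * s) * c" by (auto simp: dvd_def)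
  have "odd x" using assms(5) by (simp add: x_def)
  then obtain q where q: "odd q" "chebyshev_V M x = 2 ^ s * q"
    using chebyshev_V_two_power_mult[OF _ assms(3)] assms(2) by blast
  define w where "w = u * (1 + 2 ^ (n' + 1) * u)"
  have "odd w" using assms(6) by (simp add: w_def)
  have x2: "x\<^sup>2 - 1 = 2 ^ (n + 1) * w"
    by (simp add: x_def w_def n' power2_eq_square power_add algebra_simps)
  \<comment> \<open>In the first case \<open>m = Suc M\<close> needs \<open>M > 0\<close>, which holds because \<open>r\<close> is odd.\<close>
  obtain \<sigma> :: 'a where "\<sigma> = 1 \<or> \<sigma> = -1"
    and \<sigma>: "chebyshev_T m x = x * chebyshev_T M x + \<sigma> * (x\<^sup>2 - 1) * chebyshev_V M x"
  proof (cases "M = m - 1")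
    case True
    with assms(2,3) have "m = Suc M" by (cases m) auto
    then show ?thesis using that[of 1] chebyshev_T_Suc[of M x] by simp
  next
    case False
    with assms(1) have "M = Suc m" by simp
    then have "chebyshev_T m x = x * chebyshev_T M x + (-1) * (x\<^sup>2 - 1) * chebyshev_V M x"
      using chebyshev_T_pred[of m x] by (simp add: algebra_simps)
    then show ?thesis by (rule that[rotated]) simp
  qed
  define q' where "q' = x * 2 ^ (s' + 1) * c + \<sigma> * w * q"
  have "odd q'" using \<open>\<sigma> = 1 \<or> \<sigma> = -1\<close> \<open>odd w\<close> q(1) by (auto simp: q'_def)
  have "chebyshev_T m x - x = x * (chebyshev_T M x - 1) + \<sigma> * (x\<^sup>2 - 1) * chebyshev_V M x"
    by (simp add: \<sigma> algebra_simps)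
  also have "\<dots> = 2 ^ (s + n + 1) * q'"
    by (simp add: c x2 q(2) q'_def s' power_add algebra_simps mult_2_right)
  finally show ?thesis using \<open>odd q'\<close> by (auto simp: x_def)
qed

section \<open>Valuations of truncated 2-adic integers\<close>

lemma Z2_mod_2: "t \<in> Z2 \<Longrightarrow> t (Suc k) mod 2 = t 1 mod 2"
proof (induction k)
  case (Suc k)
  have "t (Suc (Suc k)) mod 2 ^ Suc k = t (Suc k)"
    using Suc.prems by (simp only: Z2_def mem_Collect_eq)
  moreover have "t (Suc (Suc k)) mod 2 = t (Suc (Suc k)) mod 2 ^ Suc k mod 2"
    by (simp add: mod_mod_cancel)
  ultimately have "t (Suc (Suc k)) mod 2 = t (Suc k) mod 2"
    by simp
  then show ?case using Suc by simp
qed simp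

lemma z2_map_z2_map:
  assumes "\<And>a b. a - b dvd f a - f b"
  shows "z2_map f (z2_map g t) = z2_map (f \<circ> g) t"
proof
  fix k
  have "2 ^ k dvd g (t k) mod 2 ^ k - g (t k)"
    by (simp only: mod_eq_dvd_iff[symmetric] mod_mod_trivial)
  then have "2 ^ k dvd f (g (t k) mod 2 ^ k) - f (g (t k))"
    using assms by (rule dvd_trans)
  then have "f (g (t k) mod 2 ^ k) mod 2 ^ k = f (g (t k)) mod 2 ^ k"
    by (simp only: mod_eq_dvd_iff)
  then show "z2_map f (z2_map g t) k = z2_map (f \<circ> g) t k"
    by (simp add: z2_map_def)
qed

lemma v2_eqI:
  assumes "\<And>k. a (Suc k) = 0 \<longleftrightarrow> Suc k \<le> e"
  shows "v2 a = enat e"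
proof -
  have "a (Suc e) \<noteq> 0" using assms[of e] by simp
  moreover have "(LEAST k. a (Suc k) \<noteq> 0) = e"
  proof (rule Least_equality)
    show "a (Suc e) \<noteq> 0" by fact
    show "e \<le> k" if "a (Suc k) \<noteq> 0" for k
      using that assms[of k] by simp
  qed
  ultimately show ?thesis unfolding v2_def by auto
qed

lemma v2_z2_map_eq:
  assumes "\<And>k. \<exists>q. odd q \<and> f (t (Suc k)) = 2 ^ e * q"
  shows "v2 (z2_map f t) = enat e"
proof (rule v2_eqI)
  fix k
  obtain q where "odd q" and q: "f (t (Suc k)) = 2 ^ e * q" using assms by blast
  have "z2_map f t (Suc k) = 0 \<longleftrightarrow> 2 ^ Suc k dvd 2 ^ e * q"
    unfolding z2_map_def by (simp only: q dvd_eq_mod_eq_0)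
  then show "z2_map f t (Suc k) = 0 \<longleftrightarrow> Suc k \<le> e"
    by (simp only: power2_dvd_mult_odd_iff[OF \<open>odd q\<close>])
qed

theorem mainTheorem6:
  fixes m n :: nat and t :: "nat \<Rightarrow> int"
  assumes "odd m" and "m \<ge> 3" and "n \<ge> 2"
    and "t \<in> Z2" and "t 1 = 1"
  shows "v2 (z2_map (\<lambda>x. \<lfloor>chebT m (of_int x)\<rfloor> - x) (z2_map (\<lambda>x. 1 + 2^n * x) t))
           = enat (s_val m + n + 1)"
proof -
  obtain M r where M: "M = m - 1 \<or> M = m + 1" "M = 2 ^ s_val m * r" "odd r" "s_val m \<ge> 2"
    using s_val_decomposition[OF assms(1,2)] .
  have "(\<lambda>x. \<lfloor>chebT m (of_int x)\<rfloor> - x) = (\<lambda>x. chebyshev_T m x - x)"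
    using assms(2) by (simp add: chebT_eq_chebyshev_T flip: of_int_chebyshev_T)
  moreover have "z2_map (\<lambda>x. chebyshev_T m x - x) (z2_map (\<lambda>x. 1 + 2 ^ n * x) t)
      = z2_map (\<lambda>x. chebyshev_T m (1 + 2 ^ n * x) - (1 + 2 ^ n * x)) t"
  proof (subst z2_map_z2_map)
    show "a - b dvd (chebyshev_T m a - a) - (chebyshev_T m b - b)" for a b :: int
      using dvd_diff[OF chebyshev_T_diff_dvd dvd_refl, of a b m] by (simp add: algebra_simps)
  qed (simp add: comp_def)
  moreover have "\<exists>q. odd q \<and> chebyshev_T m (1 + 2 ^ n * t (Suc k)) - (1 + 2 ^ n * t (Suc k))
      = 2 ^ (s_val m + n + 1) * q" for k
  proof (rule chebyshev_T_minus_id_exact[OF M assms(3)])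
    show "odd (t (Suc k))"
      using Z2_mod_2[OF assms(4), of k] assms(5) by (simp add: odd_iff_mod_2_eq_one)
  qed
  ultimately show ?thesis by (simp add: v2_z2_map_eq)
qed

end
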